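(* Let $e_1,\dots,e_m$ ($m\ge2$) be training domains, $\mathcal{F}$ a class of predictors, and for $f\in\mathcal{F}$ let $\mathcal{R}^{e_1}(f),\dots,\mathcal{R}^{e_m}(f)\in\mathbb{R}$ be its risks, with sample mean $\hat\mu_f=\frac1m\sum_{i=1}^m\mathcal{R}^{e_i}(f)$ and sample standard deviation $\hat\sigma_f=\big(\frac{1}{m-1}\sum_{i=1}^m(\mathcal{R}^{e_i}(f)-\hat\mu_f)^2\big)^{1/2}$. For $\alpha\in(0,1)$ let $\hat f_\alpha\in\arg\min_{f\in\mathcal{F}}\,\hat\mu_f+\Phi^{-1}(\alpha)\hat\sigma_f$ (assumed to exist), where $\Phi^{-1}$ is the standard normal quantile function. Assume 1. $\mathcal{F}$ contains an invariant-risk predictor $f_0$ with finite mean risk, i.e. $\hat\sigma_{f_0}=0$ and $\hat\mu_{f_0}<\infty$; and 2. $\mu_*:=\inf_{f\in\mathcal{F}}\hat\mu_f>-\infty$. Then $\lim_{\alpha\to1}\hat\sigma_{\hat f_\alpha}=0$ and $\limsup_{\alpha\to1}\hat\mu_{\hat f_\alpha}\le\hat\mu_{f_0}$.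
   Context: $\hat f_\alpha$ is the predictor minimizing the $\alpha$-quantile of the Gaussian distribution $\mathcal{N}(\hat\mu_f,\hat\sigma_f^2)$ fitted to the training-domain risks of $f$. *)

theory Defs
  imports "HOL-Probability.Probability"
begin

definition std_normal_cdf :: "real \<Rightarrow> real" where
  "std_normal_cdf x = measure (density lborel std_normal_density) {..x}"

definition std_normal_quantile :: "real \<Rightarrow> real" where
  "std_normal_quantile a = Inf {x. a \<le> std_normal_cdf x}"

definition sample_mean :: "nat \<Rightarrow> ('f \<Rightarrow> nat \<Rightarrow> real) \<Rightarrow> 'f \<Rightarrow> real" where
  "sample_mean m R f = (\<Sum>i<m. R f i) / real m"

definition sample_sd :: "nat \<Rightarrow> ('f \<Rightarrow> nat \<Rightarrow> real) \<Rightarrow> 'f \<Rightarrow> real" where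
  "sample_sd m R f = sqrt ((\<Sum>i<m. (R f i - sample_mean m R f)\<^sup>2) / (real m - 1))"

end

theory Submission imports Defs begin

text \<open>Since the normal quantile tends to \<open>+\<infinity>\<close> as \<open>\<alpha> \<rightarrow> 1\<close>, comparing \<open>f\<^sub>\<alpha>\<close> with the
  invariant predictor \<open>f\<^sub>0\<close> gives \<open>\<mu>(f\<^sub>\<alpha>) + \<Phi>\<inverse>(\<alpha>) \<sigma>(f\<^sub>\<alpha>) \<le> \<mu>(f\<^sub>0)\<close>. As soon as
  \<open>\<Phi>\<inverse>(\<alpha>) \<ge> 0\<close> this bounds \<open>\<mu>(f\<^sub>\<alpha>)\<close> by \<open>\<mu>(f\<^sub>0)\<close>, and together with \<open>\<mu> \<ge> \<mu>\<^sub>*\<close> it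
  bounds \<open>\<sigma>(f\<^sub>\<alpha>)\<close> by \<open>(\<mu>(f\<^sub>0) - \<mu>\<^sub>*) / \<Phi>\<inverse>(\<alpha>) \<rightarrow> 0\<close>.\<close>

lemma cdf_density_less_1:
  fixes f :: "real \<Rightarrow> real"
  assumes "real_distribution (density lborel f)" and f_meas: "f \<in> borel_measurable borel"
    and f_pos: "\<And>x. 0 < f x"
  shows "cdf (density lborel f) x < 1"
proof -
  interpret real_distribution "density lborel f" by fact
  have "emeasure lborel {x<..x + 1} \<le> emeasure lborel {x<..}"
    by (intro emeasure_mono) auto
  then have "{x<..} \<notin> null_sets lborel"
    by (auto simp: null_sets_def)
  have "{x<..} \<notin> null_sets (density lborel f)"
  proof
    assume "{x<..} \<in> null_sets (density lborel f)"
    then have "AE y in lborel. y \<in> {x<..} \<longrightarrow> ennreal (f y) = 0"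
      using f_meas by (simp add: null_sets_density_iff)
    then have "AE y in lborel. y \<notin> {x<..}"
      by (rule eventually_mono) (metis ennreal_eq_0_iff f_pos greaterThan_iff not_le)
    with \<open>{x<..} \<notin> null_sets lborel\<close> show False
      by (simp add: AE_iff_null_sets)
  qed
  then have "prob {x<..} \<noteq> 0"
    by (simp add: null_sets_def emeasure_eq_measure)
  moreover have "prob {x<..} = 1 - cdf (density lborel f) x"
    using prob_compl[of "{..x}"] by (simp add: cdf_def Compl_eq_Diff_UNIV[symmetric] Compl_atMost)
  ultimately show ?thesis
    using measure_nonneg[of "density lborel f" "{x<..}"] by linarith
qed

lemma std_normal_cdf_eq_cdf: "std_normal_cdf = cdf std_normal_distribution"
  by (simp add: fun_eq_iff std_normal_cdf_def cdf_def)

lemma std_normal_cdf_less_1: "std_normal_cdf x < 1"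
  unfolding std_normal_cdf_eq_cdf
  by (rule cdf_density_less_1) (auto simp: real_dist_normal_dist normal_density_pos)

lemma (in real_distribution) quantile_tendsto_at_top:
  assumes cdf_less_1: "\<And>x. cdf M x < 1"
  shows "filterlim (\<lambda>a. Inf {x. a \<le> cdf M x}) at_top (at_left 1)"
  unfolding filterlim_at_top
proof
  fix B :: real
  show "\<forall>\<^sub>F a in at_left 1. B \<le> Inf {x. a \<le> cdf M x}"
    using eventually_at_left_real[OF cdf_less_1[of B]]
  proof eventually_elim
    case (elim a)
    have "\<forall>\<^sub>F x in at_top. a < cdf M x"
      using cdf_lim_at_top_prob elim by (auto simp: order_tendsto_iff)
    then obtain x where "a < cdf M x"
      using eventually_happens' trivial_limit_at_top_linorder by blast
    then have nonempty: "{x. a \<le> cdf M x} \<noteq> {}"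
      by (auto intro: less_imp_le)
    have "B \<le> y" if "a \<le> cdf M y" for y
      using that elim cdf_nondecreasing[of y B] by (cases "y \<le> B") auto
    then show ?case
      using nonempty by (auto intro: cInf_greatest)
  qed
qed

lemma std_normal_quantile_tendsto_at_top: "filterlim std_normal_quantile at_top (at_left 1)"
proof -
  interpret real_distribution std_normal_distribution
    by (rule real_dist_normal_dist)
  show ?thesis
    using quantile_tendsto_at_top std_normal_cdf_less_1
    unfolding std_normal_quantile_def std_normal_cdf_eq_cdf by blast
qed

text \<open>No lower bound on \<open>m\<close> is needed: for \<open>m \<le> 1\<close> the sum of squares vanishes,
  so the sign of the denominator \<open>real m - 1\<close> is irrelevant.\<close>

lemma sample_sd_nonneg: "0 \<le> sample_sd m R f"
proof (cases "m = 0")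
  case False
  then show ?thesis
    unfolding sample_sd_def by (intro real_sqrt_ge_zero divide_nonneg_nonneg sum_nonneg) auto
qed (simp add: sample_sd_def)

lemma penalized_minimizer_penalty_tendsto_0:
  fixes \<mu> \<sigma> :: "'f \<Rightarrow> real" and q :: "'a \<Rightarrow> real" and g :: "'a \<Rightarrow> 'f"
  assumes q: "filterlim q at_top F"
    and g: "\<forall>\<^sub>F a in F. g a \<in> S \<and> \<mu> (g a) + q a * \<sigma> (g a) \<le> c"
    and bdd: "bdd_below (\<mu> ` S)" and \<sigma>_nonneg: "\<And>f. 0 \<le> \<sigma> f"
  shows "((\<lambda>a. \<sigma> (g a)) \<longlongrightarrow> 0) F"
proof -
  obtain L where L: "\<And>f. f \<in> S \<Longrightarrow> L \<le> \<mu> f"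
    using bdd by (auto simp: bdd_below_def)
  have lower: "\<forall>\<^sub>F a in F. 0 \<le> \<sigma> (g a)"
    using \<sigma>_nonneg by simp
  have "\<forall>\<^sub>F a in F. 0 < q a"
    using q by (rule filterlim_at_top_dense[THEN iffD1, rule_format])
  with g have upper: "\<forall>\<^sub>F a in F. \<sigma> (g a) \<le> (c - L) / q a"
  proof eventually_elim
    case (elim a)
    then have "q a * \<sigma> (g a) \<le> c - L"
      using L[of "g a"] by linarith
    with \<open>0 < q a\<close> show ?case
      by (simp add: field_simps)
  qed
  have "((\<lambda>a. (c - L) / q a) \<longlongrightarrow> 0) F"
    by (rule tendsto_divide_0[OF tendsto_const filterlim_at_top_imp_at_infinity[OF q]])
  then show ?thesis
    by (rule tendsto_sandwich[OF lower upper tendsto_const])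
qed

theorem propositionA4:
  fixes m :: nat and R :: "'f \<Rightarrow> nat \<Rightarrow> real" and F :: "'f set"
    and fhat :: "real \<Rightarrow> 'f" and f0 :: 'f
  assumes m2: "m \<ge> 2"
    and fhat_min: "\<And>a. 0 < a \<Longrightarrow> a < 1 \<Longrightarrow> fhat a \<in> F \<and>
        (\<forall>f\<in>F. sample_mean m R (fhat a) + std_normal_quantile a * sample_sd m R (fhat a)
               \<le> sample_mean m R f + std_normal_quantile a * sample_sd m R f)"
    and f0: "f0 \<in> F" "sample_sd m R f0 = 0"
    and bdd: "bdd_below (sample_mean m R ` F)"
  shows "((\<lambda>a. sample_sd m R (fhat a)) \<longlongrightarrow> 0) (at_left 1) \<and>
         Limsup (at_left 1) (\<lambda>a. ereal (sample_mean m R (fhat a))) \<le> ereal (sample_mean m R f0)"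
proof
  have below_f0: "\<forall>\<^sub>F a in at_left 1. fhat a \<in> F \<and>
      sample_mean m R (fhat a) + std_normal_quantile a * sample_sd m R (fhat a) \<le> sample_mean m R f0"
    using eventually_at_left_real[OF zero_less_one]
  proof eventually_elim
    case (elim a)
    then show ?case
      using fhat_min[of a] f0 by force
  qed
  show "((\<lambda>a. sample_sd m R (fhat a)) \<longlongrightarrow> 0) (at_left 1)"
    using std_normal_quantile_tendsto_at_top below_f0 bdd sample_sd_nonneg
    by (rule penalized_minimizer_penalty_tendsto_0)
  have "\<forall>\<^sub>F a in at_left 1. 0 \<le> std_normal_quantile a"
    using std_normal_quantile_tendsto_at_top by (simp add: filterlim_at_top)
  with below_f0 have "\<forall>\<^sub>F a in at_left 1. sample_mean m R (fhat a) \<le> sample_mean m R f0"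
  proof eventually_elim
    case (elim a)
    then have "0 \<le> std_normal_quantile a * sample_sd m R (fhat a)"
      by (simp add: sample_sd_nonneg)
    with elim show ?case
      by linarith
  qed
  then show "Limsup (at_left 1) (\<lambda>a. ereal (sample_mean m R (fhat a))) \<le> ereal (sample_mean m R f0)"
    by (intro Limsup_bounded) (auto elim: eventually_mono)
qed

end
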